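(* Let $\Gamma$ be a finite, simple, connected graph and $G\le\mathrm{Aut}(\Gamma)$ acting transitively on $\mathrm{E}(\Gamma)$. Let $\{u,v\}$ be an edge of $\Gamma$ and let $N$ be a normal subgroup of $G$ such that $N_v^{\Gamma(v)}$ is transitive. Let $A$ be the set of vertices $a$ of $\Gamma$ such that there is a path of even length between $u$ and $a$. Then $N$ acts transitively on $A$.
   Context: $N_v^{\Gamma(v)}$ is the permutation group induced by the stabiliser $N_v$ of $v$ in $N$ on the neighbourhood $\Gamma(v)$ of $v$. *)

theory Defs
  imports "HOL-Algebra.Algebra"
begin

definition simple_graph :: "'a set \<Rightarrow> ('a \<Rightarrow> 'a \<Rightarrow> bool) \<Rightarrow> bool" where
  "simple_graph V E \<longleftrightarrow> (\<forall>x y. E x y \<longrightarrow> x \<in> V \<and> y \<in> V) \<and>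
     (\<forall>x. \<not> E x x) \<and> (\<forall>x y. E x y \<longrightarrow> E y x)"

text \<open>A walk is a nonempty vertex list with consecutive vertices adjacent;
  its length is the number of edges, i.e. length minus one.\<close>
definition walk :: "'a set \<Rightarrow> ('a \<Rightarrow> 'a \<Rightarrow> bool) \<Rightarrow> 'a list \<Rightarrow> bool" where
  "walk V E xs \<longleftrightarrow> xs \<noteq> [] \<and> set xs \<subseteq> V \<and>
     (\<forall>i. Suc i < length xs \<longrightarrow> E (xs ! i) (xs ! Suc i))"

definition walk_between :: "'a set \<Rightarrow> ('a \<Rightarrow> 'a \<Rightarrow> bool) \<Rightarrow> 'a \<Rightarrow> 'a \<Rightarrow> 'a list \<Rightarrow> bool" where
  "walk_between V E x y xs \<longleftrightarrow> walk V E xs \<and> hd xs = x \<and> last xs = y"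

definition connected_graph :: "'a set \<Rightarrow> ('a \<Rightarrow> 'a \<Rightarrow> bool) \<Rightarrow> bool" where
  "connected_graph V E \<longleftrightarrow> (\<forall>x\<in>V. \<forall>y\<in>V. \<exists>xs. walk_between V E x y xs)"

definition edges :: "('a \<Rightarrow> 'a \<Rightarrow> bool) \<Rightarrow> 'a set set" where
  "edges E = {{x, y} | x y. E x y}"

definition nbhd :: "('a \<Rightarrow> 'a \<Rightarrow> bool) \<Rightarrow> 'a \<Rightarrow> 'a set" where
  "nbhd E v = {w. E v w}"

definition graph_auts :: "'a set \<Rightarrow> ('a \<Rightarrow> 'a \<Rightarrow> bool) \<Rightarrow> ('a \<Rightarrow> 'a) set" where
  "graph_auts V E = {g \<in> Bij V. \<forall>x\<in>V. \<forall>y\<in>V. E x y \<longleftrightarrow> E (g x) (g y)}"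

definition Aut_graph :: "'a set \<Rightarrow> ('a \<Rightarrow> 'a \<Rightarrow> bool) \<Rightarrow> ('a \<Rightarrow> 'a) monoid" where
  "Aut_graph V E = (BijGroup V) \<lparr>carrier := graph_auts V E\<rparr>"

definition transitive_on :: "('a \<Rightarrow> 'a) set \<Rightarrow> 'a set \<Rightarrow> bool" where
  "transitive_on K S \<longleftrightarrow> (\<forall>x\<in>S. \<forall>y\<in>S. \<exists>h\<in>K. h x = y)"

definition edge_transitive :: "('a \<Rightarrow> 'a) set \<Rightarrow> ('a \<Rightarrow> 'a \<Rightarrow> bool) \<Rightarrow> bool" where
  "edge_transitive H E \<longleftrightarrow> (\<forall>d1\<in>edges E. \<forall>d2\<in>edges E. \<exists>h\<in>H. h ` d1 = d2)"

definition stabiliser :: "('a \<Rightarrow> 'a) set \<Rightarrow> 'a \<Rightarrow> ('a \<Rightarrow> 'a) set" where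
  "stabiliser N v = {n \<in> N. n v = v}"

text \<open>N_v^{\<Gamma>(v)} is transitive: N_v acts transitively on \<Gamma>(v).\<close>
definition local_transitive :: "('a \<Rightarrow> 'a) set \<Rightarrow> ('a \<Rightarrow> 'a \<Rightarrow> bool) \<Rightarrow> 'a \<Rightarrow> bool" where
  "local_transitive N E v \<longleftrightarrow> transitive_on (stabiliser N v) (nbhd E v)"

end

theory Submission
  imports Defs
begin

text \<open>By edge-transitivity every edge is an image of \<open>{u, v}\<close>, so it joins the orbits
  \<open>u\<^sup>G\<close> and \<open>v\<^sup>G\<close>; along a walk starting at \<open>u\<close> the odd-indexed vertices therefore lie
  in \<open>v\<^sup>G\<close>. Conjugating the local action of \<open>N\<^sub>v\<close> by an element of \<open>G\<close> (normality
  keeps the conjugate in \<open>N\<close>) shows that \<open>N\<^sub>b\<close> is transitive on \<open>\<Gamma>(b)\<close> for every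
  \<open>b \<in> v\<^sup>G\<close>. Hence every double step of a walk from \<open>u\<close>, whose middle vertex lies in
  \<open>v\<^sup>G\<close>, is bridged by an element of \<open>N\<close>, and the end of every even walk from \<open>u\<close> lies in \<open>u\<^sup>N\<close>.\<close>

abbreviation perm_group :: "'a set \<Rightarrow> ('a \<Rightarrow> 'a) set \<Rightarrow> ('a \<Rightarrow> 'a) monoid" where
  "perm_group V H \<equiv> (BijGroup V)\<lparr>carrier := H\<rparr>"

abbreviation perm_orbit :: "'a set \<Rightarrow> ('a \<Rightarrow> 'a) set \<Rightarrow> 'a \<Rightarrow> 'a set" where
  "perm_orbit V H x \<equiv> orbit (perm_group V H) (\<lambda>g. g) x"

lemma Aut_graph_update_carrier: "(Aut_graph V E)\<lparr>carrier := H\<rparr> = perm_group V H"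
  by (simp add: Aut_graph_def)

locale aut_group =
  fixes V :: "'a set" and E :: "'a \<Rightarrow> 'a \<Rightarrow> bool" and G :: "('a \<Rightarrow> 'a) set"
  assumes simple: "simple_graph V E"
    and group_perm_group: "group (perm_group V G)"
    and subset_graph_auts: "G \<subseteq> graph_auts V E"

sublocale aut_group \<subseteq> group_action "perm_group V G" V "\<lambda>g. g"
proof (intro group_action.intro group_hom.intro group_hom_axioms.intro)
  show "(\<lambda>g. g) \<in> hom (perm_group V G) (BijGroup V)"
    using subset_graph_auts by (auto simp: hom_def BijGroup_def graph_auts_def)
qed (simp_all add: group_perm_group group_BijGroup)

context aut_group
begin

lemma adjacent_in_V: "E x y \<Longrightarrow> x \<in> V \<and> y \<in> V"
  using simple by (simp add: simple_graph_def)

lemma adjacent_sym: "E x y \<Longrightarrow> E y x"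
  using simple by (simp add: simple_graph_def)

lemma adjacent_image_iff: "g \<in> G \<Longrightarrow> x \<in> V \<Longrightarrow> y \<in> V \<Longrightarrow> E (g x) (g y) \<longleftrightarrow> E x y"
  using subset_graph_auts by (auto simp: graph_auts_def)

lemma subgroup_aut_group:
  assumes "subgroup H (perm_group V G)"
  shows "aut_group V E H"
proof (rule aut_group.intro)
  show "group (perm_group V H)"
    using subgroup.subgroup_is_group[OF assms group_perm_group] by simp
  show "H \<subseteq> graph_auts V E"
    using subgroup.subset[OF assms] subset_graph_auts by simp
qed (rule simple)

lemma transitive_on_subset_orbit:
  assumes "x \<in> V" and "S \<subseteq> perm_orbit V G x"
  shows "transitive_on G S"
  unfolding transitive_on_def
proof (intro ballI)
  fix y z assume "y \<in> S" "z \<in> S"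
  then have y: "y \<in> perm_orbit V G x" and z: "z \<in> perm_orbit V G x"
    using assms(2) by blast+
  have "y \<in> V" "z \<in> V"
    using y z assms(1) element_image unfolding orbit_def by auto
  then have "z \<in> perm_orbit V G y"
    using assms(1) y z orbit_sym[of x y] orbit_trans[of y x z] by blast
  then show "\<exists>h\<in>G. h y = z"
    unfolding orbit_def by auto
qed

text \<open>An edge-transitive group maps the edge \<open>{a, b}\<close> onto every edge, in one of two
  orientations; in the reversed one \<open>a\<close> and \<open>b\<close> lie in a common orbit.\<close>
lemma edge_transitive_orbit_step:
  assumes "edge_transitive G E" and "E a b" and "E x y"
    and "x \<in> perm_orbit V G a"
  shows "y \<in> perm_orbit V G b"
proof -
  have "{x, y} \<in> edges E" "{a, b} \<in> edges E"
    using assms(2,3) by (auto simp: edges_def)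
  then obtain h where "h \<in> G" "h ` {a, b} = {x, y}"
    using assms(1) unfolding edge_transitive_def by blast
  then have h: "h \<in> G" "{h a, h b} = {x, y}"
    by simp_all
  have V: "a \<in> V" "b \<in> V" "x \<in> V" "y \<in> V"
    using adjacent_in_V assms(2,3) by auto
  consider "h a = x" "h b = y" | "h b = x" "h a = y"
    using h(2) by (metis doubleton_eq_iff)
  then show ?thesis
  proof cases
    case 1
    then show ?thesis using h(1) by (auto simp: orbit_def)
  next
    case 2
    then have "x \<in> perm_orbit V G b" "y \<in> perm_orbit V G a"
      using h(1) by (auto simp: orbit_def)
    then have "b \<in> perm_orbit V G a"
      using assms(4) V orbit_sym[of b x] orbit_trans[of a x b] by blast
    then have "a \<in> perm_orbit V G b"
      using V orbit_sym[of a b] by blast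
    then show ?thesis
      using \<open>y \<in> perm_orbit V G a\<close> V orbit_trans[of b a y] by blast
  qed
qed

lemma walk_alternates_orbits:
  assumes "edge_transitive G E" and "E u v"
    and "walk V E xs" and "hd xs = u" and "i < length xs"
  shows "xs ! i \<in> perm_orbit V G (if even i then u else v)"
  using assms(5)
proof (induction i)
  case 0
  then show ?case
    using assms(2,3,4) adjacent_in_V orbit_refl by (cases xs) (auto simp: walk_def)
next
  case (Suc i)
  have edge: "E (xs ! i) (xs ! Suc i)"
    using assms(3) Suc.prems by (simp add: walk_def)
  have IH: "xs ! i \<in> perm_orbit V G (if even i then u else v)"
    using Suc by simp
  show ?case
  proof (cases "even i")
    case True
    then show ?thesis
      using IH edge_transitive_orbit_step[OF assms(1,2) edge] by simp
  next
    case False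
    then show ?thesis
      using IH edge_transitive_orbit_step[OF assms(1) adjacent_sym[OF assms(2)] edge] by simp
  qed
qed

lemma normal_subgroup_moves_neighbours:
  assumes "N \<lhd> perm_group V G" and "local_transitive N E v" and "v \<in> V"
    and "b \<in> perm_orbit V G v" and "E b a" and "E b c"
  shows "c \<in> perm_orbit V N a"
proof -
  interpret G: group "perm_group V G" by (rule group_perm_group)
  obtain g where g: "g \<in> G" "g v = b"
    using assms(4) by (auto simp: orbit_def)
  let ?i = "inv\<^bsub>perm_group V G\<^esub> g"
  have V: "a \<in> V" "b \<in> V" "c \<in> V"
    using assms(5,6) adjacent_in_V by auto
  have i: "?i \<in> G" "?i b = v"
    using G.inv_closed g orbit_sym_aux[of g v b] assms(3) by auto
  have "E v (?i a)" "E v (?i c)"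
    using adjacent_image_iff[OF i(1)] assms(5,6) i(2) V by auto
  then obtain s where s: "s \<in> N" "s v = v" "s (?i a) = ?i c"
    using assms(2) by (auto simp: local_transitive_def transitive_on_def stabiliser_def nbhd_def)
  have sG: "s \<in> G"
    using s(1) normal_imp_subgroup[OF assms(1)] subgroup.subset by fastforce
  let ?n = "g \<otimes>\<^bsub>perm_group V G\<^esub> s \<otimes>\<^bsub>perm_group V G\<^esub> ?i"
  have "?n a = g (s (?i a))"
    using composition_rule[of a "g \<otimes>\<^bsub>perm_group V G\<^esub> s" ?i] composition_rule[of "?i a" g s]
      G.m_closed[of g s] element_image[of ?i a] g(1) sG i(1) V(1) by simp
  also have "\<dots> = c"
    using s(3) orbit_sym_aux[of ?i c "?i c"] G.inv_inv g(1) i(1) V by simp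
  moreover have "?n \<in> N"
    using normal.inv_op_closed2[OF assms(1)] g(1) s(1) by simp
  ultimately show ?thesis
    by (auto simp: orbit_def)
qed

lemma even_walk_reaches_orbit:
  assumes "edge_transitive G E" and "E u v"
    and "N \<lhd> perm_group V G" and "local_transitive N E v"
    and "walk V E xs" and "hd xs = u" and "2 * k < length xs"
  shows "xs ! (2 * k) \<in> perm_orbit V N u"
proof -
  interpret N: aut_group V E N
    using subgroup_aut_group normal_imp_subgroup[OF assms(3)] by simp
  have v: "v \<in> V"
    using adjacent_in_V assms(2) by blast
  show ?thesis
    using assms(7)
  proof (induction k)
    case 0
    show ?case
      using assms(2,5,6) adjacent_in_V N.orbit_refl by (cases xs) (auto simp: walk_def)
  next
    case (Suc k)
    let ?a = "xs ! (2 * k)" and ?b = "xs ! Suc (2 * k)" and ?c = "xs ! Suc (Suc (2 * k))"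
    have "E ?a ?b" "E ?b ?c"
      using assms(5) Suc.prems by (simp_all add: walk_def)
    moreover have "?b \<in> perm_orbit V G v"
      using walk_alternates_orbits[OF assms(1,2,5,6), of "Suc (2 * k)"] Suc.prems by simp
    ultimately have "?c \<in> perm_orbit V N ?a"
      using normal_subgroup_moves_neighbours[OF assms(3,4) v] adjacent_sym by blast
    moreover have "?a \<in> perm_orbit V N u"
      using Suc by simp
    ultimately have "?c \<in> perm_orbit V N u"
      using N.orbit_trans adjacent_in_V \<open>E ?a ?b\<close> \<open>E ?b ?c\<close> assms(2) by meson
    then show ?case
      by simp
  qed
qed

lemma even_walk_end_in_orbit:
  assumes "edge_transitive G E" and "E u v"
    and "N \<lhd> perm_group V G" and "local_transitive N E v"
    and "walk_between V E u a xs" and "even (length xs - 1)"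
  shows "a \<in> perm_orbit V N u"
proof -
  have walk: "walk V E xs" "hd xs = u" "last xs = a"
    using assms(5) by (simp_all add: walk_between_def)
  then have "xs \<noteq> []"
    by (simp add: walk_def)
  moreover obtain k where "length xs - 1 = 2 * k"
    using assms(6) by (rule evenE)
  ultimately have "length xs = Suc (2 * k)"
    by (cases xs) simp_all
  then have "2 * k < length xs" and "last xs = xs ! (2 * k)"
    using \<open>xs \<noteq> []\<close> by (simp_all add: last_conv_nth)
  then show ?thesis
    using even_walk_reaches_orbit[OF assms(1-4) walk(1,2)] walk(3) by simp
qed

end

theorem lemma2p6:
  fixes V :: "'a set" and E :: "'a \<Rightarrow> 'a \<Rightarrow> bool"
    and G N :: "('a \<Rightarrow> 'a) set" and u v :: 'a
  assumes "finite V" and "simple_graph V E" and "connected_graph V E"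
    and "subgroup G (Aut_graph V E)"
    and "edge_transitive G E"
    and "E u v"
    and "N \<lhd> (Aut_graph V E)\<lparr>carrier := G\<rparr>"
    and "local_transitive N E v"
  shows "transitive_on N {a \<in> V. \<exists>xs. walk_between V E u a xs \<and> even (length xs - 1)}"
proof -
  have normal: "N \<lhd> perm_group V G"
    using assms(7) by (simp add: Aut_graph_update_carrier)
  interpret aut_group V E G
    using assms(2) normal.axioms(2)[OF normal] subgroup.subset[OF assms(4)]
    by (intro aut_group.intro) (simp_all add: Aut_graph_def)
  interpret N: aut_group V E N
    using subgroup_aut_group normal_imp_subgroup[OF normal] by simp
  have "{a \<in> V. \<exists>xs. walk_between V E u a xs \<and> even (length xs - 1)} \<subseteq> perm_orbit V N u"
    using even_walk_end_in_orbit[OF assms(5,6) normal assms(8)] by blast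
  then show ?thesis
    using N.transitive_on_subset_orbit adjacent_in_V[OF assms(6)] by blast
qed

end
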